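(* Let $G=G(I,P;E)$ be a pinned graph and $\mathbf p$ a configuration in $\mathbb R^2$ such that the pinned framework $G(\mathbf p)$ is an independent 1-DOF linkage, and let $d$ be a driver of $G(\mathbf p)$ which is active. Then the driver replacement $\overline G(\mathbf p)$ is an isostatic pinned framework (and hence $\overline G$ is a pinned isostatic graph).
   Context: A pinned graph $G(I,P;E)$ has inner vertices $I$, pinned vertices $P$, and edges $E$ each with at least one endpoint in $I$. In the pinned framework $G(\mathbf p)$ the pinned vertices are fixed; a first-order motion assigns $\mathbf p'_i\in\mathbb R^2$ to inner vertices ($\mathbf p'_v=\mathbf 0$ for $v\in P$) with $(\mathbf p_i-\mathbf p_j)\cdot(\mathbf p'_i-\mathbf p'_j)=0$ for every edge $ij$; a self-stress is an assignment of scalars $\lambda_{ij}$ to edges with $\sum_{j:ij\in E}\lambda_{ij}(\mathbf p_i-\mathbf p_j)=\mathbf 0$ at each inner vertex. $G(\mathbf p)$ is independent if its only self-stress is zero; it is an independent 1-DOF linkage if it is independent and its space of first-order motions is one-dimensional (so $|E|=2|I|-1$); it is isostatic if it is independent and has only the zero first-order motion. A driver of a 1-DOF linkage is one of: (a) a piston on a pair of vertices $a,b$; (b) an angle driver on an angle $\angle abc$ formed by edges $ab,bc$ at an inner vertex $b$ of degree $\ge3$; (c) an angle driver on an angle $\angle abc$ formed by edges $ab,bc$ at an inner vertex $b$ of degree $2$; (d) an angle driver on an angle $\angle a p_i p_j$ where $p_i,p_j\in P$, $a\in I$ and $ap_i\in E$. The brace pair of the driver is $\{a,b\}$ in case (a),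 $\{a,c\}$ in cases (b),(c), and $\{a,p_j\}$ in case (d). The driver is active at $G(\mathbf p)$ if for a non-zero first-order motion $\mathbf p'$, the brace pair $\{x,y\}$ has non-zero strain: $(\mathbf p_x-\mathbf p_y)\cdot(\mathbf p'_x-\mathbf p'_y)\ne 0$ (equivalently, after appending the row of the brace pair to the rigidity matrix, the system $R\mathbf p'=(0,\dots,0,s_d)^T$ is solvable for every $s_d$). The driver replacement $\overline G$ is: in case (a), $G$ plus the bar $ab$; in case (b), $G$ plus the bar $ac$; in case (c), $G$ plus the bar $ac$ with the vertex $b$ and its two edges removed; in case (d), $G$ with $a$ made into an additional pinned vertex (edges between pinned vertices being discarded). $\overline G(\mathbf p)$ uses the same positions $\mathbf p$. A pinned isostatic graph is one satisfying $|E|=2|I|$ and, for every subgraph $G'(I',P';E')$ with $E'\neq\emptyset$: $|E'|\le 2|I'|$ if $|P'|\ge 2$, $|E'|\le2|I'|-1$ if $|P'|=1$, $|E'|\le 2|I'|-3$ if $P'=\emptyset$. *)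

theory Defs
  imports "HOL-Analysis.Analysis"
begin

definition pinned_graph :: "'v set \<Rightarrow> 'v set \<Rightarrow> 'v set set \<Rightarrow> bool" where
  "pinned_graph I P E \<longleftrightarrow> finite I \<and> finite P \<and> I \<inter> P = {} \<and>
     (\<forall>e\<in>E. \<exists>a b. e = {a, b} \<and> a \<noteq> b \<and> a \<in> I \<and> b \<in> I \<union> P)"

type_synonym 'v config = "'v \<Rightarrow> real^2"

definition first_order_motion ::
  "'v set \<Rightarrow> 'v set \<Rightarrow> 'v set set \<Rightarrow> 'v config \<Rightarrow> 'v config \<Rightarrow> bool" where
  "first_order_motion I P E p q \<longleftrightarrow> (\<forall>v. v \<notin> I \<longrightarrow> q v = 0) \<and>
     (\<forall>i j. {i, j} \<in> E \<longrightarrow> (p i - p j) \<bullet> (q i - q j) = 0)"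

definition self_stress ::
  "'v set \<Rightarrow> 'v set \<Rightarrow> 'v set set \<Rightarrow> 'v config \<Rightarrow> ('v set \<Rightarrow> real) \<Rightarrow> bool" where
  "self_stress I P E p lam \<longleftrightarrow>
     (\<forall>i\<in>I. (\<Sum>j\<in>{j. {i, j} \<in> E}. lam {i, j} *\<^sub>R (p i - p j)) = 0)"

definition independent_fw :: "'v set \<Rightarrow> 'v set \<Rightarrow> 'v set set \<Rightarrow> 'v config \<Rightarrow> bool" where
  "independent_fw I P E p \<longleftrightarrow>
     (\<forall>lam. self_stress I P E p lam \<longrightarrow> (\<forall>e\<in>E. lam e = 0))"

definition one_dof :: "'v set \<Rightarrow> 'v set \<Rightarrow> 'v set set \<Rightarrow> 'v config \<Rightarrow> bool" where
  "one_dof I P E p \<longleftrightarrow> (\<exists>m. first_order_motion I P E p m \<and> m \<noteq> (\<lambda>_. 0) \<and>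
     (\<forall>q. first_order_motion I P E p q \<longrightarrow> (\<exists>c::real. q = (\<lambda>v. c *\<^sub>R m v))))"

definition independent_1dof_linkage :: "'v set \<Rightarrow> 'v set \<Rightarrow> 'v set set \<Rightarrow> 'v config \<Rightarrow> bool" where
  "independent_1dof_linkage I P E p \<longleftrightarrow> independent_fw I P E p \<and> one_dof I P E p"

definition isostatic_fw :: "'v set \<Rightarrow> 'v set \<Rightarrow> 'v set set \<Rightarrow> 'v config \<Rightarrow> bool" where
  "isostatic_fw I P E p \<longleftrightarrow> independent_fw I P E p \<and>
     (\<forall>q. first_order_motion I P E p q \<longrightarrow> q = (\<lambda>_. 0))"

text \<open>Drivers: (a) piston on a b; (b)/(c) angle driver on angle a b c at inner b
  (case (b) if deg b \<ge> 3, case (c) if deg b = 2); (d) angle a p_i p_j.\<close>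

datatype 'v driver = Piston 'v 'v | AngleDriver 'v 'v 'v | PinAngleDriver 'v 'v 'v

definition degree :: "'v set set \<Rightarrow> 'v \<Rightarrow> nat" where
  "degree E v = card {e\<in>E. v \<in> e}"

fun is_driver :: "'v set \<Rightarrow> 'v set \<Rightarrow> 'v set set \<Rightarrow> 'v driver \<Rightarrow> bool" where
  "is_driver I P E (Piston a b) \<longleftrightarrow> a \<in> I \<union> P \<and> b \<in> I \<union> P \<and> a \<noteq> b"
| "is_driver I P E (AngleDriver a b c) \<longleftrightarrow> b \<in> I \<and> {a, b} \<in> E \<and> {b, c} \<in> E \<and> a \<noteq> c
     \<and> degree E b \<ge> 2"
| "is_driver I P E (PinAngleDriver a q_i q_j) \<longleftrightarrow> a \<in> I \<and> q_i \<in> P \<and> q_j \<in> P \<and> q_i \<noteq> q_j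
     \<and> {a, q_i} \<in> E"

fun brace_pair :: "'v driver \<Rightarrow> 'v \<times> 'v" where
  "brace_pair (Piston a b) = (a, b)"
| "brace_pair (AngleDriver a b c) = (a, c)"
| "brace_pair (PinAngleDriver a q_i q_j) = (a, q_j)"

definition active_driver ::
  "'v set \<Rightarrow> 'v set \<Rightarrow> 'v set set \<Rightarrow> 'v config \<Rightarrow> 'v driver \<Rightarrow> bool" where
  "active_driver I P E p d \<longleftrightarrow> (case brace_pair d of (x, y) \<Rightarrow>
     (\<exists>q. first_order_motion I P E p q \<and> q \<noteq> (\<lambda>_. 0) \<and>
          (p x - p y) \<bullet> (q x - q y) \<noteq> 0))"

fun driver_replacement ::
  "'v set \<Rightarrow> 'v set \<Rightarrow> 'v set set \<Rightarrow> 'v driver \<Rightarrow> 'v set \<times> 'v set \<times> 'v set set" where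
  "driver_replacement I P E (Piston a b) = (I, P, insert {a, b} E)"
| "driver_replacement I P E (AngleDriver a b c) =
     (if degree E b = 2
      then (I - {b}, P, insert {a, c} {e\<in>E. b \<notin> e})
      else (I, P, insert {a, c} E))"
| "driver_replacement I P E (PinAngleDriver a q_i q_j) =
     (I - {a}, insert a P, {e\<in>E. \<not> e \<subseteq> insert a P})"

definition pinned_isostatic_graph :: "'v set \<Rightarrow> 'v set \<Rightarrow> 'v set set \<Rightarrow> bool" where
  "pinned_isostatic_graph I P E \<longleftrightarrow> int (card E) = 2 * int (card I) \<and>
     (\<forall>I' P' E'. I' \<subseteq> I \<longrightarrow> P' \<subseteq> P \<longrightarrow> E' \<subseteq> E \<longrightarrow> E' \<noteq> {} \<longrightarrow>
        (\<forall>e\<in>E'. e \<subseteq> I' \<union> P') \<longrightarrow>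
        (card P' \<ge> 2 \<longrightarrow> int (card E') \<le> 2 * int (card I')) \<and>
        (card P' = 1 \<longrightarrow> int (card E') \<le> 2 * int (card I') - 1) \<and>
        (P' = {} \<longrightarrow> int (card E') \<le> 2 * int (card I') - 3))"

end

theory Submission
  imports Defs "HOL-Library.Function_Algebras"
begin

text \<open>
  The proof is linear algebra on the rigidity operator.  Virtual work (the adjointness of the
  map sending velocities to bar strains and the map sending edge weights to resultant forces)
  gives Maxwell's counts: an independent framework has |E| + k \<le> 2|I| for any k independent
  first-order motions, and a framework without motions has 2|I| \<le> |E|.  Hence an isostatic
  framework has |E| = 2|I|, and applying the first count to its (independent) subframeworks with
  the trivial motions they admit (a rotation about a single pin; a rotation and two translations
  when there are no pins) yields the pinned isostatic subgraph counts.

  It remains to show that each driver replacement is isostatic.  Its first-order motions extend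
  to motions of the linkage that do not strain the brace pair; as the motions are the multiples
  of one generator, which strains the brace because the driver is active, they vanish.  For
  independence, virtual work against the generator shows that a self-stress of the replacement
  carries no weight on the new bar (cases a, b, c), respectively that its unbalanced force at
  the newly pinned vertex can be cancelled by the bar to the first pin (case d); the result is a
  self-stress of the linkage, which is zero.
\<close>

section \<open>Linear algebra on function spaces\<close>

text \<open>Functions into a real vector space form a real vector space under pointwise scaling; this
  lets us use the library's dimension bounds for families of velocity fields and edge weights.\<close>
definition scale_fun :: "real \<Rightarrow> ('x \<Rightarrow> 'b::real_vector) \<Rightarrow> ('x \<Rightarrow> 'b)" where
  "scale_fun c f = (\<lambda>x. c *\<^sub>R f x)"

lemma scale_fun_apply [simp]: "scale_fun c f x = c *\<^sub>R f x"
  by (simp add: scale_fun_def)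

lemma vector_space_scale_fun: "vector_space (scale_fun :: real \<Rightarrow> ('x \<Rightarrow> 'b::real_vector) \<Rightarrow> _)"
  unfolding vector_space_def scale_fun_def by (auto simp: fun_eq_iff algebra_simps)

lemma sum_fun_apply: "(\<Sum>k\<in>A. f k) x = (\<Sum>k\<in>A. f k x)"
  by (induction A rule: infinite_finite_induct) auto

lemma card_le_if_independent_in_span:
  fixes f :: "'k \<Rightarrow> ('x \<Rightarrow> 'b::real_vector)"
  assumes K: "finite K" and T: "finite T"
    and indep: "\<And>c. (\<Sum>k\<in>K. scale_fun (c k) (f k)) = 0 \<Longrightarrow> \<forall>k\<in>K. c k = 0"
    and span: "f ` K \<subseteq> module.span scale_fun T"
  shows "card K \<le> card T"
proof -
  interpret V: vector_space "scale_fun :: real \<Rightarrow> ('x \<Rightarrow> 'b) \<Rightarrow> _"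
    by (rule vector_space_scale_fun)
  have inj: "inj_on f K"
  proof (rule inj_onI, rule ccontr)
    fix k1 k2 assume k: "k1 \<in> K" "k2 \<in> K" "f k1 = f k2" "k1 \<noteq> k2"
    define c where "c k = (if k = k1 then 1 else if k = k2 then -1 else 0 :: real)" for k
    have "(\<Sum>k\<in>K. scale_fun (c k) (f k)) = (\<Sum>k\<in>{k1,k2}. scale_fun (c k) (f k))"
      by (rule sum.mono_neutral_right) (use K k in \<open>auto simp: c_def fun_eq_iff\<close>)
    also have "\<dots> = 0" using k by (simp add: c_def fun_eq_iff)
    finally show False using indep[of c] k by (auto simp: c_def)
  qed
  have "V.independent (f ` K)"
  proof (rule V.independent_if_scalars_zero)
    show "finite (f ` K)" using K by simp
    fix g x assume s: "(\<Sum>x\<in>f ` K. scale_fun (g x) x) = 0" and x: "x \<in> f ` K"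
    have "(\<Sum>k\<in>K. scale_fun (g (f k)) (f k)) = 0" using s by (simp add: sum.reindex[OF inj])
    then have "\<forall>k\<in>K. g (f k) = 0" by (rule indep)
    with x show "g x = 0" by auto
  qed
  from V.independent_span_bound[OF T this span] inj show ?thesis
    by (simp add: card_image)
qed

definition unit_edge :: "'e \<Rightarrow> 'e \<Rightarrow> real" where
  "unit_edge e = (\<lambda>x. if x = e then 1 else 0)"

definition unit_velocity :: "'v \<Rightarrow> 2 \<Rightarrow> 'v \<Rightarrow> real^2" where
  "unit_velocity i k = (\<lambda>v. if v = i then axis k 1 else 0)"

lemma span_unit_edges:
  fixes g :: "'e \<Rightarrow> real"
  assumes E: "finite E" and g: "\<And>e. e \<notin> E \<Longrightarrow> g e = 0"
  shows "g \<in> module.span scale_fun (unit_edge ` E)"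
proof -
  interpret V: vector_space "scale_fun :: real \<Rightarrow> ('e \<Rightarrow> real) \<Rightarrow> _"
    by (rule vector_space_scale_fun)
  have "g = (\<Sum>e\<in>E. scale_fun (g e) (unit_edge e))"
  proof
    fix x
    show "g x = (\<Sum>e\<in>E. scale_fun (g e) (unit_edge e)) x"
      using E g by (auto simp: sum_fun_apply unit_edge_def if_distrib cong: if_cong)
  qed
  also have "\<dots> \<in> V.span (unit_edge ` E)"
    by (intro V.span_sum V.span_scale V.span_base) auto
  finally show ?thesis .
qed

lemma axis_expansion: "(\<Sum>k\<in>UNIV. (x $ k) *\<^sub>R axis k (1::real)) = (x::real^2)"
  by (simp add: vec_eq_iff forall_2 sum_2 axis_def)

lemma span_unit_velocities:
  fixes g :: "'v \<Rightarrow> real^2"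
  assumes I: "finite I" and g: "\<And>v. v \<notin> I \<Longrightarrow> g v = 0"
  shows "g \<in> module.span scale_fun (case_prod unit_velocity ` (I \<times> UNIV))"
proof -
  interpret V: vector_space "scale_fun :: real \<Rightarrow> ('v \<Rightarrow> real^2) \<Rightarrow> _"
    by (rule vector_space_scale_fun)
  have "g = (\<Sum>(i,k)\<in>I \<times> UNIV. scale_fun (g i $ k) (unit_velocity i k))"
  proof
    fix x
    have "(\<Sum>(i,k)\<in>I \<times> UNIV. scale_fun (g i $ k) (unit_velocity i k)) x
        = (\<Sum>i\<in>I. \<Sum>k\<in>UNIV. (g i $ k) *\<^sub>R unit_velocity i k x)"
      by (simp add: sum_fun_apply sum.cartesian_product split_beta)
    also have "\<dots> = (\<Sum>i\<in>I. if i = x then g x else 0)"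
      by (rule sum.cong) (auto simp: unit_velocity_def axis_expansion)
    also have "\<dots> = g x" using I g by auto
    finally show "g x = (\<Sum>(i,k)\<in>I \<times> UNIV. scale_fun (g i $ k) (unit_velocity i k)) x" by simp
  qed
  also have "\<dots> \<in> V.span (case_prod unit_velocity ` (I \<times> UNIV))"
    by (intro V.span_sum) (force intro: V.span_scale V.span_base)
  finally show ?thesis .
qed

section \<open>Forces, strains and virtual work\<close>

definition simple_edges :: "'v set set \<Rightarrow> bool" where
  "simple_edges E \<longleftrightarrow> (\<forall>e\<in>E. \<exists>a b. e = {a, b} \<and> a \<noteq> b)"

lemma finite_Union_simple_edges: "finite E \<Longrightarrow> simple_edges E \<Longrightarrow> finite (\<Union>E)"
  unfolding simple_edges_def by auto

lemma simple_edges_subset: "simple_edges E \<Longrightarrow> E' \<subseteq> E \<Longrightarrow> simple_edges E'"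
  unfolding simple_edges_def by blast

lemma simple_edge_distinct: "simple_edges E \<Longrightarrow> {a, b} \<in> E \<Longrightarrow> a \<noteq> b"
  unfolding simple_edges_def by (metis doubleton_eq_iff)

definition stress_force :: "'v set set \<Rightarrow> 'v config \<Rightarrow> ('v set \<Rightarrow> real) \<Rightarrow> 'v \<Rightarrow> real^2" where
  "stress_force E p lam i = (\<Sum>j\<in>{j. {i, j} \<in> E}. lam {i, j} *\<^sub>R (p i - p j))"

lemma self_stress_iff_force:
  "self_stress I P E p lam \<longleftrightarrow> (\<forall>i\<in>I. stress_force E p lam i = 0)"
  by (simp add: self_stress_def stress_force_def)

text \<open>The first-order strain of the bar e under the velocities q, written symmetrically so that
  no orientation of e has to be chosen; V is any finite vertex set containing e.\<close>
definition bar_strain :: "'v set \<Rightarrow> 'v config \<Rightarrow> 'v config \<Rightarrow> 'v set \<Rightarrow> real" where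
  "bar_strain V p q e = (\<Sum>v\<in>V. \<Sum>j\<in>V. if e = {v, j} then q v \<bullet> (p v - p j) else 0)"

lemma bar_strain_pair:
  assumes "finite V" "a \<in> V" "b \<in> V" "a \<noteq> b"
  shows "bar_strain V p q {a, b} = (p a - p b) \<bullet> (q a - q b)"
proof -
  have "(\<Sum>j\<in>V. if {a, b} = {v, j} then q v \<bullet> (p v - p j) else 0)
      = (if v = a then q a \<bullet> (p a - p b) else 0) + (if v = b then q b \<bullet> (p b - p a) else 0)" for v
    using assms by (auto simp: doubleton_eq_iff)
  then have "bar_strain V p q {a, b}
      = (\<Sum>v\<in>V. (if v = a then q a \<bullet> (p a - p b) else 0) + (if v = b then q b \<bullet> (p b - p a) else 0))"
    by (simp add: bar_strain_def)
  also have "\<dots> = q a \<bullet> (p a - p b) + q b \<bullet> (p b - p a)"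
    using assms by (simp add: sum.distrib)
  finally show ?thesis by (simp add: algebra_simps inner_commute)
qed

lemma bar_strain_edge:
  assumes "finite V" "\<Union>E \<subseteq> V" "simple_edges E" "e \<in> E"
  obtains a b where "e = {a, b}" "a \<noteq> b" "\<And>q. bar_strain V p q e = (p a - p b) \<bullet> (q a - q b)"
proof -
  from assms obtain a b where ab: "e = {a, b}" "a \<noteq> b" unfolding simple_edges_def by blast
  with assms have "a \<in> V" "b \<in> V" by auto
  with ab assms(1) show ?thesis by (intro that[of a b]) (simp_all add: bar_strain_pair)
qed

lemma motion_bar_strain_zero:
  assumes "first_order_motion I P E p q" "finite V" "\<Union>E \<subseteq> V" "simple_edges E" "e \<in> E"
  shows "bar_strain V p q e = 0"
proof -
  obtain a b where "e = {a, b}" "bar_strain V p q e = (p a - p b) \<bullet> (q a - q b)"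
    using bar_strain_edge[OF assms(2-5)] by metis
  with assms(1,5) show ?thesis by (simp add: first_order_motion_def)
qed

lemma stress_force_over:
  assumes "finite V" "\<Union>E \<subseteq> V"
  shows "stress_force E p lam v = (\<Sum>j\<in>V. if {v, j} \<in> E then lam {v, j} *\<^sub>R (p v - p j) else 0)"
proof -
  have "{j. {v, j} \<in> E} = {j\<in>V. {v, j} \<in> E}" using assms by auto
  then show ?thesis using assms(1) by (simp add: stress_force_def sum.inter_filter)
qed

text \<open>Principle of virtual work: the work of the edge weights on the strains equals the work of
  the resultant forces on the velocities. The rigidity matrix and its transpose are adjoint.\<close>
lemma virtual_work:
  assumes "finite V" "\<Union>E \<subseteq> V" "finite E"
  shows "(\<Sum>e\<in>E. lam e * bar_strain V p q e) = (\<Sum>v\<in>V. q v \<bullet> stress_force E p lam v)"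
proof -
  have "(\<Sum>e\<in>E. lam e * bar_strain V p q e)
      = (\<Sum>e\<in>E. \<Sum>v\<in>V. \<Sum>j\<in>V. if e = {v, j} then lam e * (q v \<bullet> (p v - p j)) else 0)"
    by (simp add: bar_strain_def sum_distrib_left if_distrib cong: if_cong)
  also have "\<dots> = (\<Sum>v\<in>V. \<Sum>j\<in>V. \<Sum>e\<in>E. if e = {v, j} then lam e * (q v \<bullet> (p v - p j)) else 0)"
    by (subst sum.swap) (subst sum.swap, simp)
  also have "\<dots> = (\<Sum>v\<in>V. \<Sum>j\<in>V. if {v, j} \<in> E then lam {v, j} * (q v \<bullet> (p v - p j)) else 0)"
    using assms(3) by (simp add: sum.delta)
  also have "\<dots> = (\<Sum>v\<in>V. q v \<bullet> stress_force E p lam v)"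
    using assms by (simp add: stress_force_over inner_sum_right if_distrib[of "inner _"] cong: if_cong)
  finally show ?thesis .
qed

lemma stress_annihilates_velocity:
  assumes "finite V" "\<Union>E \<subseteq> V" "finite E" "self_stress I P E p lam" "\<And>v. v \<notin> I \<Longrightarrow> q v = 0"
  shows "(\<Sum>e\<in>E. lam e * bar_strain V p q e) = 0"
proof -
  have "q v \<bullet> stress_force E p lam v = 0" for v
    using assms(4) assms(5)[of v] by (cases "v \<in> I") (auto simp: self_stress_iff_force)
  then show ?thesis by (simp add: virtual_work[OF assms(1-3)])
qed

lemma stress_force_linear:
  assumes "finite E" "simple_edges E"
  shows "(\<Sum>e\<in>E. c e *\<^sub>R stress_force E p (unit_edge e) v) = stress_force E p c v"
proof -
  have "(\<Sum>e\<in>E. c e *\<^sub>R stress_force E p (unit_edge e) v)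
      = (\<Sum>e\<in>E. \<Sum>j\<in>{j. {v, j} \<in> E}. (if {v, j} = e then c e else 0) *\<^sub>R (p v - p j))"
    unfolding stress_force_def unit_edge_def by (simp add: scaleR_sum_right) (intro sum.cong refl; simp)
  also have "\<dots> = (\<Sum>j\<in>{j. {v, j} \<in> E}. \<Sum>e\<in>E. (if {v, j} = e then c e else 0) *\<^sub>R (p v - p j))"
    by (rule sum.swap)
  also have "\<dots> = stress_force E p c v"
    using assms(1) unfolding stress_force_def
    by (intro sum.cong) (auto simp: if_distrib[of "\<lambda>x. x *\<^sub>R _"] sum.delta' cong: if_cong)
  finally show ?thesis .
qed

lemma motion_linear_combination:
  assumes "\<And>k. k \<in> K \<Longrightarrow> first_order_motion I P E p (w k)"
  shows "first_order_motion I P E p (\<lambda>v. \<Sum>k\<in>K. c k *\<^sub>R w k v)"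
  using assms unfolding first_order_motion_def
  by (auto simp: sum_subtractf[symmetric] inner_sum_right scaleR_diff_right[symmetric] intro!: sum.neutral)

text \<open>A first-order motion that is the negative of a resultant force on the inner vertices is
  zero: by virtual work its squared norm equals the work of the forces on a motion, which is 0.\<close>
lemma motion_orthogonal_to_force_vanishes:
  assumes I: "finite I" and E: "finite E" "simple_edges E"
    and mot: "first_order_motion I P E p q"
    and opp: "\<And>v. v \<in> I \<Longrightarrow> q v = - stress_force E p lam v"
  shows "q = (\<lambda>_. 0)"
proof -
  define V where "V = I \<union> \<Union>E"
  have V: "finite V" "\<Union>E \<subseteq> V" "I \<subseteq> V"
    using I finite_Union_simple_edges[OF E] by (auto simp: V_def)
  have off: "v \<notin> I \<Longrightarrow> q v = 0" for v using mot by (simp add: first_order_motion_def)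
  have "q v \<bullet> q v = - (q v \<bullet> stress_force E p lam v)" for v
    by (cases "v \<in> I") (simp_all add: opp off)
  then have "(\<Sum>v\<in>V. q v \<bullet> q v) = - (\<Sum>v\<in>V. q v \<bullet> stress_force E p lam v)"
    by (simp add: sum_negf)
  also have "(\<Sum>v\<in>V. q v \<bullet> stress_force E p lam v) = (\<Sum>e\<in>E. lam e * bar_strain V p q e)"
    by (rule virtual_work[OF V(1,2) E(1), symmetric])
  also have "\<dots> = 0"
    using motion_bar_strain_zero[OF mot V(1,2) E(2)] by simp
  finally have "(\<Sum>v\<in>V. q v \<bullet> q v) = 0" by simp
  then have "\<forall>v\<in>V. q v \<bullet> q v = 0"
    using V(1) by (subst (asm) sum_nonneg_eq_0_iff) auto
  then show ?thesis using off V(3) by (auto simp: fun_eq_iff)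
qed

section \<open>Maxwell counting\<close>

text \<open>Maxwell's bound for independent frameworks: the unit-edge forces and any independent family
  of first-order motions are jointly independent velocity fields on I, hence there are at most 2|I|.\<close>
lemma independent_framework_count:
  fixes w :: "'k \<Rightarrow> 'v config"
  assumes I: "finite I" and E: "finite E" "simple_edges E"
    and indep: "independent_fw I P E p"
    and K: "finite K" and mot: "\<And>k. k \<in> K \<Longrightarrow> first_order_motion I P E p (w k)"
    and wind: "\<And>c. (\<Sum>k\<in>K. scale_fun (c k) (w k)) = 0 \<Longrightarrow> \<forall>k\<in>K. c k = 0"
  shows "card E + card K \<le> 2 * card I"
proof -
  define force where "force e = (\<lambda>v. if v \<in> I then stress_force E p (unit_edge e) v else 0)" for e
  define f where "f x = (case x of Inl e \<Rightarrow> force e | Inr k \<Rightarrow> w k)" for x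
  define X where "X = Inl ` E \<union> Inr ` K"
  have card_X: "card X = card E + card K"
    unfolding X_def using E K by (subst card_Un_disjoint) (auto simp: card_image)
  have "card X \<le> card (case_prod unit_velocity ` (I \<times> (UNIV::2 set)))"
  proof (rule card_le_if_independent_in_span)
    show "finite X" using E K by (simp add: X_def)
    show "finite (case_prod unit_velocity ` (I \<times> (UNIV::2 set)))" using I by simp
    have "f x v = 0" if "x \<in> X" "v \<notin> I" for x v
      using that mot by (auto simp: X_def f_def force_def first_order_motion_def)
    then show "f ` X \<subseteq> module.span scale_fun (case_prod unit_velocity ` (I \<times> UNIV))"
      using span_unit_velocities[OF I] by blast
  next
    fix c assume s: "(\<Sum>x\<in>X. scale_fun (c x) (f x)) = 0"
    define lam where "lam e = c (Inl e)" for e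
    define W where "W v = (\<Sum>k\<in>K. c (Inr k) *\<^sub>R w k v)" for v
    have split: "(\<Sum>x\<in>X. scale_fun (c x) (f x)) v
        = (if v \<in> I then stress_force E p lam v else 0) + W v" for v
    proof -
      have "(\<Sum>x\<in>X. scale_fun (c x) (f x)) v
          = (\<Sum>e\<in>E. c (Inl e) *\<^sub>R force e v) + W v"
        unfolding X_def W_def using E K
        by (subst sum.union_disjoint) (auto simp: sum.reindex f_def sum_fun_apply)
      then show ?thesis
        using stress_force_linear[OF E, of lam p v] by (simp add: force_def lam_def)
    qed
    have W_motion: "first_order_motion I P E p W"
      unfolding W_def by (rule motion_linear_combination) (rule mot)
    have W0: "W = (\<lambda>_. 0)"
    proof (rule motion_orthogonal_to_force_vanishes[OF I E W_motion])
      fix v assume "v \<in> I"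
      with s split[of v] show "W v = - stress_force E p lam v"
        by (simp add: eq_neg_iff_add_eq_0 add.commute)
    qed
    have "(\<Sum>k\<in>K. scale_fun (c (Inr k)) (w k)) = 0"
      using W0 by (simp add: fun_eq_iff sum_fun_apply W_def)
    then have cK: "\<forall>k\<in>K. c (Inr k) = 0" by (rule wind)
    have "stress_force E p lam i = 0" if "i \<in> I" for i
      using split[of i] that s W0 by simp
    then have "self_stress I P E p lam" by (simp add: self_stress_iff_force)
    then have "\<forall>e\<in>E. lam e = 0" using indep by (simp add: independent_fw_def)
    with cK show "\<forall>x\<in>X. c x = 0" by (auto simp: X_def lam_def)
  qed
  also have "\<dots> \<le> card (I \<times> (UNIV::2 set))"
    using I by (intro card_image_le) simp
  finally show ?thesis using card_X by (simp add: card_cartesian_product)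
qed

lemma unit_velocity_coefficient:
  assumes "finite I" "i \<in> I"
  shows "(\<Sum>x\<in>I \<times> UNIV. c x *\<^sub>R case_prod unit_velocity x i) $ k = c (i, k)"
proof -
  have "(\<Sum>x\<in>I \<times> UNIV. c x *\<^sub>R case_prod unit_velocity x i)
      = (\<Sum>a\<in>I. \<Sum>k'\<in>UNIV. c (a, k') *\<^sub>R unit_velocity a k' i)"
    by (simp add: sum.cartesian_product split_beta)
  also have "\<dots> = (\<Sum>a\<in>I. if a = i then (\<Sum>k'\<in>UNIV. c (i, k') *\<^sub>R axis k' 1) else 0)"
    by (intro sum.cong refl) (auto simp: unit_velocity_def)
  also have "\<dots> = (\<Sum>k'\<in>UNIV. c (i, k') *\<^sub>R axis k' (1::real))"
    using assms by simp
  finally show ?thesis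
    using exhaust_2[of k] by (auto simp: sum_2 axis_def)
qed

text \<open>Dually, if the only first-order motion is zero, the strains of the 2|I| unit velocities
  are independent edge weights, hence there are at least 2|I| edges.\<close>
lemma rigid_framework_count:
  assumes I: "finite I" and E: "finite E" "simple_edges E"
    and rigid: "\<And>q. first_order_motion I P E p q \<Longrightarrow> q = (\<lambda>_. 0)"
  shows "2 * card I \<le> card E"
proof -
  define V where "V = I \<union> \<Union>E"
  have V: "finite V" "\<Union>E \<subseteq> V" using I finite_Union_simple_edges[OF E] by (auto simp: V_def)
  define f where "f x = (\<lambda>e. if e \<in> E then bar_strain V p (case_prod unit_velocity x) e else 0)"
    for x :: "'a \<times> 2"
  have "card (I \<times> (UNIV::2 set)) \<le> card (unit_edge ` E)"
  proof (rule card_le_if_independent_in_span)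
    show "finite (I \<times> (UNIV::2 set))" "finite (unit_edge ` E)" using I E by simp_all
    show "f ` (I \<times> UNIV) \<subseteq> module.span scale_fun (unit_edge ` E)"
      by (auto simp: f_def intro!: span_unit_edges[OF E(1)])
  next
    fix c assume s: "(\<Sum>x\<in>I \<times> UNIV. scale_fun (c x) (f x)) = 0"
    define q where "q v = (\<Sum>x\<in>I \<times> UNIV. c x *\<^sub>R case_prod unit_velocity x v)" for v
    have "first_order_motion I P E p q"
      unfolding first_order_motion_def
    proof (intro conjI allI impI)
      fix v assume "v \<notin> I" then show "q v = 0"
        by (auto simp: q_def unit_velocity_def intro!: sum.neutral)
    next
      fix i j assume ij: "{i, j} \<in> E"
      obtain a b where ab: "{i, j} = {a, b}"
        and strain: "\<And>q. bar_strain V p q {i, j} = (p a - p b) \<bullet> (q a - q b)"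
        using bar_strain_edge[OF V E(2) ij] by metis
      have "(p a - p b) \<bullet> (q a - q b)
          = (\<Sum>x\<in>I \<times> UNIV. c x * bar_strain V p (case_prod unit_velocity x) {i, j})"
        by (simp add: strain q_def sum_subtractf[symmetric] inner_sum_right
            scaleR_diff_right[symmetric] sum_distrib_left)
      also have "\<dots> = (\<Sum>x\<in>I \<times> UNIV. scale_fun (c x) (f x)) {i, j}"
        using ij by (simp add: sum_fun_apply f_def)
      finally have "(p a - p b) \<bullet> (q a - q b) = 0" using s by simp
      with ab show "(p i - p j) \<bullet> (q i - q j) = 0"
        by (auto simp: doubleton_eq_iff inner_commute algebra_simps)
    qed
    then have q0: "q = (\<lambda>_. 0)" by (rule rigid)
    show "\<forall>x\<in>I \<times> UNIV. c x = 0"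
    proof
      fix x assume "x \<in> I \<times> (UNIV::2 set)"
      then obtain i k where x: "x = (i, k)" "i \<in> I" by auto
      have "c x = q i $ k"
        unfolding q_def x(1) by (rule unit_velocity_coefficient[OF I x(2), symmetric])
      then show "c x = 0" by (simp add: q0)
    qed
  qed
  also have "\<dots> \<le> card E" using E by (simp add: card_image_le)
  finally show ?thesis by (simp add: card_cartesian_product)
qed

lemma isostatic_edge_count:
  assumes "finite I" "finite E" "simple_edges E" "isostatic_fw I P E p"
  shows "card E = 2 * card I"
  using independent_framework_count[OF assms(1-3), of P p "{}" "\<lambda>_ _. 0"]
    rigid_framework_count[OF assms(1-3), of P p] assms(4)
  by (fastforce simp: isostatic_fw_def)

section \<open>Subframeworks and trivial motions\<close>

lemma self_stress_zero_extension:
  assumes V: "finite V" "\<Union>E \<subseteq> V" "\<Union>E' \<subseteq> V"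
    and stress: "self_stress I' P' E' p lam"
    and E0: "E0 \<subseteq> E" "E0 \<subseteq> E'" and zero: "\<And>e. e \<in> E' \<Longrightarrow> e \<notin> E0 \<Longrightarrow> lam e = 0"
    and outside: "\<And>i e. i \<in> I \<Longrightarrow> i \<notin> I' \<Longrightarrow> e \<in> E0 \<Longrightarrow> i \<notin> e"
  shows "self_stress I P E p (\<lambda>e. if e \<in> E0 then lam e else 0)"
proof -
  define mu where "mu = (\<lambda>e. if e \<in> E0 then lam e else 0)"
  have "stress_force E p mu i = 0" if i: "i \<in> I" for i
  proof (cases "i \<in> I'")
    case True
    have "stress_force E p mu i = stress_force E' p lam i"
      unfolding stress_force_over[OF V(1,2)] stress_force_over[OF V(1,3)]
      using E0 zero by (intro sum.cong refl) (auto simp: mu_def)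
    with True stress show ?thesis by (simp add: self_stress_iff_force)
  next
    case False
    then have "mu {i, j} = 0" for j using outside[OF i False] by (auto simp: mu_def)
    then show ?thesis by (simp add: stress_force_def)
  qed
  then show ?thesis by (simp add: self_stress_iff_force flip: mu_def)
qed

lemma independent_subframework:
  assumes E: "finite E" "simple_edges E" and indep: "independent_fw I P E p"
    and sub: "E' \<subseteq> E" and outside: "\<And>i e. i \<in> I \<Longrightarrow> i \<notin> I' \<Longrightarrow> e \<in> E' \<Longrightarrow> i \<notin> e"
  shows "independent_fw I' P' E' p"
  unfolding independent_fw_def
proof (intro allI impI ballI)
  fix lam e assume stress: "self_stress I' P' E' p lam" and e: "e \<in> E'"
  have union: "\<Union>E' \<subseteq> \<Union>E" using sub by auto
  have "self_stress I P E p (\<lambda>e. if e \<in> E' then lam e else 0)"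
    by (rule self_stress_zero_extension[OF finite_Union_simple_edges[OF E] subset_refl union
          stress sub subset_refl _ outside]) simp
  moreover have "e \<in> E" using e sub by blast
  ultimately have "(if e \<in> E' then lam e else 0) = 0"
    using indep unfolding independent_fw_def by blast
  with e show "lam e = 0" by simp
qed

text \<open>In an independent framework no bar has coincident endpoints: otherwise the unit weight on
  that bar would be a non-zero self-stress.\<close>
lemma independent_bar_nondegenerate:
  assumes indep: "independent_fw I P E p" and ab: "{a, b} \<in> E"
  shows "p a \<noteq> p b"
proof
  assume pab: "p a = p b"
  have "self_stress I P E p (unit_edge {a, b})"
    unfolding self_stress_def
  proof (intro ballI sum.neutral)
    fix i j
    show "unit_edge {a, b} {i, j} *\<^sub>R (p i - p j) = 0"
      using pab by (auto simp: unit_edge_def doubleton_eq_iff)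
  qed
  with indep ab have "unit_edge {a, b} {a, b} = 0" unfolding independent_fw_def by blast
  then show False by (simp add: unit_edge_def)
qed

definition rot90 :: "real^2 \<Rightarrow> real^2" where
  "rot90 x = vector [- (x $ 2), x $ 1]"

lemma inner_vec2: "(x::real^2) \<bullet> y = x $ 1 * y $ 1 + x $ 2 * y $ 2"
  by (simp add: inner_vec_def sum_2)

lemma rot90_component [simp]: "rot90 x $ 1 = - (x $ 2)" "rot90 x $ 2 = x $ 1"
  by (simp_all add: rot90_def)

lemma rot90_diff: "rot90 x - rot90 y = rot90 (x - y)"
  by (simp add: vec_eq_iff forall_2)

lemma rot90_orthogonal [simp]: "x \<bullet> rot90 x = 0"
  by (simp add: inner_vec2 algebra_simps)

lemma rot90_eq_0_iff: "rot90 x = 0 \<longleftrightarrow> x = 0"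
  by (auto simp: vec_eq_iff forall_2)

lemma rotation_motion:
  assumes "\<And>i j. {i, j} \<in> E \<Longrightarrow> j \<notin> I \<Longrightarrow> p j = c"
  shows "first_order_motion I P E p (\<lambda>v. if v \<in> I then rot90 (p v - c) else 0)"
  unfolding first_order_motion_def
proof (intro conjI allI impI)
  fix i j assume ij: "{i, j} \<in> E"
  have ji: "{j, i} \<in> E" using ij by (simp add: insert_commute)
  have rot_endpoint: "(if v \<in> I then rot90 (p v - c) else 0) = rot90 (p v - c)" if "v \<in> {i, j}" for v
    using that assms[OF ij] assms[OF ji] by (auto simp: rot90_eq_0_iff)
  show "(p i - p j) \<bullet> ((if i \<in> I then rot90 (p i - c) else 0)
      - (if j \<in> I then rot90 (p j - c) else 0)) = 0"
    using rot_endpoint[of i] rot_endpoint[of j] by (simp add: rot90_diff)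
qed simp

lemma translation_motion:
  assumes "\<And>i j. {i, j} \<in> E \<Longrightarrow> j \<in> I"
  shows "first_order_motion I P E p (\<lambda>v. if v \<in> I then t else 0)"
  unfolding first_order_motion_def
proof (intro conjI allI impI)
  fix i j assume ij: "{i, j} \<in> E"
  then have "{j, i} \<in> E" by (simp add: insert_commute)
  with ij assms show "(p i - p j) \<bullet> ((if i \<in> I then t else 0) - (if j \<in> I then t else 0)) = 0"
    by simp
qed simp

text \<open>With a single pin the rotation about it is a non-trivial motion, which sharpens Maxwell's bound
  by one.\<close>
lemma independent_one_pin_count:
  assumes I: "finite I" and E: "finite E" "simple_edges E"
    and indep: "independent_fw I P E p"
    and pinned: "\<And>i j. {i, j} \<in> E \<Longrightarrow> j \<notin> I \<Longrightarrow> p j = c"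
    and v0: "v0 \<in> I" "p v0 \<noteq> c"
  shows "card E + 1 \<le> 2 * card I"
proof -
  define w where "w = (\<lambda>(_::unit) v. if v \<in> I then rot90 (p v - c) else 0)"
  have "card E + card {()} \<le> 2 * card I"
  proof (rule independent_framework_count[OF I E indep, of "{()}" w])
    show "first_order_motion I P E p (w k)" for k
      unfolding w_def using pinned by (simp add: rotation_motion)
    fix a assume "(\<Sum>k\<in>{()}. scale_fun (a k) (w k)) = 0"
    then have "(\<Sum>k\<in>{()}. scale_fun (a k) (w k)) v0 = 0" by simp
    then have "a () *\<^sub>R rot90 (p v0 - c) = 0" using v0 by (simp add: w_def)
    then show "\<forall>k\<in>{()}. a k = 0" using v0 by (simp add: rot90_eq_0_iff)
  qed simp
  then show ?thesis by simp
qed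

text \<open>Without pins, the rotation and the two translations are independent motions as soon as two
  inner vertices sit at distinct points, which sharpens Maxwell's bound by three.\<close>
lemma independent_free_count:
  assumes I: "finite I" and E: "finite E" "simple_edges E"
    and indep: "independent_fw I P E p"
    and inner: "\<And>i j. {i, j} \<in> E \<Longrightarrow> j \<in> I"
    and ab: "a \<in> I" "b \<in> I" "p a \<noteq> p b"
  shows "card E + 3 \<le> 2 * card I"
proof -
  define w where "w k v = (if v \<in> I then
      (if k = (0::nat) then rot90 (p v - 0) else if k = 1 then axis 1 1 else axis 2 1) else 0)" for k v
  have "card E + card {0::nat, 1, 2} \<le> 2 * card I"
  proof (rule independent_framework_count[OF I E indep, of "{0, 1, 2}" w])
    fix k :: nat assume "k \<in> {0, 1, 2}"
    then have "w k = (\<lambda>v. if v \<in> I then rot90 (p v - 0) else 0) \<or>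
        (\<exists>t. w k = (\<lambda>v. if v \<in> I then t else 0))"
      by (auto simp: w_def fun_eq_iff)
    then show "first_order_motion I P E p (w k)"
      using rotation_motion[of E I p 0 P] translation_motion[of E I P p] inner by auto
  next
    fix c assume s: "(\<Sum>k\<in>{0::nat, 1, 2}. scale_fun (c k) (w k)) = 0"
    have components: "- c 0 * p v $ 2 + c 1 = 0" "c 0 * p v $ 1 + c 2 = 0" if v: "v \<in> I" for v
    proof -
      have "(\<Sum>k\<in>{0::nat, 1, 2}. scale_fun (c k) (w k)) v = 0" using s by simp
      then have "c 0 *\<^sub>R rot90 (p v) + c 1 *\<^sub>R axis 1 1 + c 2 *\<^sub>R axis 2 1 = 0"
        using v by (simp add: w_def add.assoc)
      then have "(c 0 *\<^sub>R rot90 (p v) + c 1 *\<^sub>R axis 1 1 + c 2 *\<^sub>R axis 2 1) $ 1 = 0"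
          "(c 0 *\<^sub>R rot90 (p v) + c 1 *\<^sub>R axis 1 1 + c 2 *\<^sub>R axis 2 1) $ 2 = 0"
        by simp_all
      then show "- c 0 * p v $ 2 + c 1 = 0" "c 0 * p v $ 1 + c 2 = 0"
        by (simp_all add: axis_def)
    qed
    have "c 0 * (p a $ 2 - p b $ 2) = 0" "c 0 * (p a $ 1 - p b $ 1) = 0"
      using components[OF ab(1)] components[OF ab(2)] unfolding right_diff_distrib by linarith+
    moreover have "p a $ 1 \<noteq> p b $ 1 \<or> p a $ 2 \<noteq> p b $ 2"
      using ab(3) by (auto simp: vec_eq_iff forall_2)
    ultimately have "c 0 = 0" by auto
    then show "\<forall>k\<in>{0::nat, 1, 2}. c k = 0" using components[OF ab(1)] by auto
  qed simp
  then show ?thesis by simp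
qed

text \<open>The underlying graph of an isostatic pinned framework is pinned isostatic: the global count is
  the Maxwell equality and the subgraph counts follow from the sharpened bounds for the independent
  subframeworks.\<close>
lemma isostatic_framework_pinned_isostatic_graph:
  assumes I: "finite I" and IP: "I \<inter> P = {}" and E: "finite E" "simple_edges E"
    and iso: "isostatic_fw I P E p"
  shows "pinned_isostatic_graph I P E"
  unfolding pinned_isostatic_graph_def
proof (intro conjI allI impI)
  show "int (card E) = 2 * int (card I)" using isostatic_edge_count[OF I E iso] by simp
  have indep: "independent_fw I P E p" using iso by (simp add: isostatic_fw_def)
  fix I' P' E' assume sub: "I' \<subseteq> I" "P' \<subseteq> P" "E' \<subseteq> E" "E' \<noteq> {}"
    and inside: "\<forall>e\<in>E'. e \<subseteq> I' \<union> P'"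
  have I': "finite I'" using finite_subset[OF sub(1) I] .
  have E': "finite E'" "simple_edges E'"
    using finite_subset[OF sub(3) E(1)] simple_edges_subset[OF E(2) sub(3)] .
  have indep': "independent_fw I' P' E' p"
  proof (rule independent_subframework[OF E indep sub(3)])
    fix i e assume "i \<in> I" "i \<notin> I'" "e \<in> E'"
    with sub(2) inside IP show "i \<notin> e" by blast
  qed
  from sub(4) obtain e0 where "e0 \<in> E'" by blast
  with E'(2) obtain a b where ab: "{a, b} \<in> E'" "a \<noteq> b"
    unfolding simple_edges_def by metis
  have pab: "p a \<noteq> p b" by (rule independent_bar_nondegenerate[OF indep' ab(1)])
  have endpoint: "j \<in> I' \<union> P'" if "{i, j} \<in> E'" for i j using inside that by auto
  show "int (card E') \<le> 2 * int (card I')" if "2 \<le> card P'"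
    using independent_framework_count[OF I' E' indep', of "{}" "\<lambda>_ _. 0"] by simp
  show "int (card E') \<le> 2 * int (card I') - 1" if "card P' = 1"
  proof -
    obtain z where z: "P' = {z}" using \<open>card P' = 1\<close> card_1_singletonE by blast
    have "a \<in> I' \<union> {z}" "b \<in> I' \<union> {z}" using inside ab(1) z by auto
    with pab obtain v0 where v0: "v0 \<in> I'" "p v0 \<noteq> p z" by (metis UnE singletonD)
    have pinned: "p j = p z" if "{i, j} \<in> E'" "j \<notin> I'" for i j
      using endpoint[OF that(1)] that(2) z by simp
    have "card E' + 1 \<le> 2 * card I'"
      by (rule independent_one_pin_count[OF I' E' indep' pinned v0])
    then show ?thesis by simp
  qed
  show "int (card E') \<le> 2 * int (card I') - 3" if "P' = {}"
  proof -
    have "a \<in> I'" "b \<in> I'" using inside ab \<open>P' = {}\<close> by auto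
    moreover have "j \<in> I'" if "{i, j} \<in> E'" for i j
      using endpoint[OF that] \<open>P' = {}\<close> by simp
    ultimately have "card E' + 3 \<le> 2 * card I'"
      using independent_free_count[OF I' E' indep'] pab by blast
    then show ?thesis by simp
  qed
qed

section \<open>Plane geometry\<close>

lemma vec2_decomposition:
  fixes u x :: "real^2"
  assumes "u \<noteq> 0"
  shows "x = ((x \<bullet> u) / (u \<bullet> u)) *\<^sub>R u + ((x \<bullet> rot90 u) / (u \<bullet> u)) *\<^sub>R rot90 u"
proof -
  have uu: "u \<bullet> u \<noteq> 0" using assms by simp
  have "(x \<bullet> u) * u $ 1 - (x \<bullet> rot90 u) * u $ 2 = x $ 1 * (u \<bullet> u)"
       "(x \<bullet> u) * u $ 2 + (x \<bullet> rot90 u) * u $ 1 = x $ 2 * (u \<bullet> u)"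
    by (simp_all add: inner_vec2 algebra_simps)
  then have "x $ 1 = ((x \<bullet> u) * u $ 1 - (x \<bullet> rot90 u) * u $ 2) / (u \<bullet> u)"
       "x $ 2 = ((x \<bullet> u) * u $ 2 + (x \<bullet> rot90 u) * u $ 1) / (u \<bullet> u)"
    using uu by simp_all
  then show ?thesis
    by (simp add: vec_eq_iff forall_2 diff_divide_distrib add_divide_distrib)
qed

lemma orthogonal_to_common_normal:
  fixes m F u :: "real^2"
  assumes "m \<noteq> 0" "m \<bullet> F = 0" "m \<bullet> u = 0" "u \<noteq> 0"
  shows "F = ((F \<bullet> u) / (u \<bullet> u)) *\<^sub>R u"
proof -
  have uu: "u \<bullet> u \<noteq> 0" using assms(4) by simp
  have m: "m = ((m \<bullet> rot90 u) / (u \<bullet> u)) *\<^sub>R rot90 u"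
    using vec2_decomposition[OF assms(4), of m] assms(3) by simp
  with assms(1) have "m \<bullet> rot90 u \<noteq> 0" by auto
  moreover have "((m \<bullet> rot90 u) / (u \<bullet> u)) * (rot90 u \<bullet> F) = 0"
    using assms(2) by (subst (asm) m) simp
  ultimately have "F \<bullet> rot90 u = 0" using uu by (simp add: inner_commute)
  then show ?thesis using vec2_decomposition[OF assms(4), of F] by simp
qed

lemma degree_two_vertex_follows:
  fixes pa pb pc va vc :: "real^2"
  assumes pac: "pa \<noteq> pc" and strain: "(pa - pc) \<bullet> (va - vc) = 0"
  shows "\<exists>vb. (pb - pa) \<bullet> (vb - va) = 0 \<and> (pb - pc) \<bullet> (vb - vc) = 0"
proof -
  define u w d where "u = pb - pa" and "w = pb - pc" and "d = va - vc"
  have "\<exists>y. u \<bullet> y = 0 \<and> w \<bullet> (y + d) = 0"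
  proof (cases "w \<bullet> rot90 u = 0")
    case False
    then show ?thesis
      by (intro exI[of _ "(- (w \<bullet> d) / (w \<bullet> rot90 u)) *\<^sub>R rot90 u"])
        (simp add: inner_add_right inner_diff_right)
  next
    case parallel: True
    show ?thesis
    proof (cases "u = 0")
      case True
      then show ?thesis by (intro exI[of _ "- d"]) simp
    next
      case False
      define t where "t = (w \<bullet> u) / (u \<bullet> u)"
      have w: "w = t *\<^sub>R u"
        using vec2_decomposition[OF False, of w] parallel by (simp add: t_def)
      have "w - u = pa - pc" by (simp add: u_def w_def)
      with pac w have "t \<noteq> 1" by auto
      have "(t - 1) *\<^sub>R u = pa - pc"
        using \<open>w - u = pa - pc\<close> w by (simp add: scaleR_diff_left)
      then have "(t - 1) * (u \<bullet> d) = 0"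
        using strain by (metis d_def inner_scaleR_left)
      with \<open>t \<noteq> 1\<close> have "w \<bullet> d = 0" by (simp add: w)
      then show ?thesis by (intro exI[of _ 0]) simp
    qed
  qed
  then obtain y where "u \<bullet> y = 0" "w \<bullet> (y + d) = 0" by blast
  then show ?thesis
    by (intro exI[of _ "va + y"]) (simp add: u_def w_def d_def algebra_simps)
qed

section \<open>Drivers of a 1-DOF linkage\<close>

definition spans_motions :: "'v set \<Rightarrow> 'v set \<Rightarrow> 'v set set \<Rightarrow> 'v config \<Rightarrow> 'v config \<Rightarrow> bool" where
  "spans_motions I P E p m \<longleftrightarrow> first_order_motion I P E p m \<and>
     (\<forall>q. first_order_motion I P E p q \<longrightarrow> (\<exists>c::real. q = (\<lambda>v. c *\<^sub>R m v)))"

lemma one_dof_spans_motions: "one_dof I P E p \<Longrightarrow> \<exists>m. spans_motions I P E p m"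
  by (auto simp: one_dof_def spans_motions_def)

lemma active_brace_strained:
  assumes gen: "spans_motions I P E p m" and act: "active_driver I P E p d"
    and brace: "brace_pair d = (x, y)"
  shows "(p x - p y) \<bullet> (m x - m y) \<noteq> 0"
proof -
  obtain q where q: "first_order_motion I P E p q" "(p x - p y) \<bullet> (q x - q y) \<noteq> 0"
    using act brace by (auto simp: active_driver_def)
  then obtain c where "q = (\<lambda>v. c *\<^sub>R m v)" using gen by (auto simp: spans_motions_def)
  with q(2) show ?thesis by (auto simp: scaleR_diff_right[symmetric])
qed

lemma unstrained_motion_vanishes:
  assumes gen: "spans_motions I P E p m" and strained: "(p x - p y) \<bullet> (m x - m y) \<noteq> 0"
    and q: "first_order_motion I P E p q" and unstrained: "(p x - p y) \<bullet> (q x - q y) = 0"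
  shows "q = (\<lambda>_. 0)"
proof -
  obtain c where c: "q = (\<lambda>v. c *\<^sub>R m v)" using gen q by (auto simp: spans_motions_def)
  with unstrained have "c * ((p x - p y) \<bullet> (m x - m y)) = 0"
    by (simp add: scaleR_diff_right[symmetric])
  with strained c show ?thesis by simp
qed

text \<open>A self-stress vanishes on a bar that is strained by a velocity field straining no other bar:
  by virtual work, its weight on that bar times the strain is zero.\<close>
lemma stress_vanishes_on_strained_bar:
  assumes E: "finite E" "simple_edges E" and stress: "self_stress I P E p lam"
    and supp: "\<And>v. v \<notin> I \<Longrightarrow> q v = 0"
    and others: "\<And>i j. {i, j} \<in> E \<Longrightarrow> {i, j} \<noteq> {x, y} \<Longrightarrow> (p i - p j) \<bullet> (q i - q j) = 0"
    and xy: "{x, y} \<in> E" and strained: "(p x - p y) \<bullet> (q x - q y) \<noteq> 0"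
  shows "lam {x, y} = 0"
proof -
  define V where "V = \<Union>E"
  have V: "finite V" "\<Union>E \<subseteq> V" using finite_Union_simple_edges[OF E] by (auto simp: V_def)
  have "x \<in> V" "y \<in> V" "x \<noteq> y" using xy strained by (auto simp: V_def)
  have "bar_strain V p q e = 0" if e: "e \<in> E" "e \<noteq> {x, y}" for e
  proof -
    obtain a b where "e = {a, b}" "\<And>q. bar_strain V p q e = (p a - p b) \<bullet> (q a - q b)"
      using bar_strain_edge[OF V E(2) e(1)] by metis
    with others e show ?thesis by simp
  qed
  then have "(\<Sum>e\<in>E. lam e * bar_strain V p q e) = lam {x, y} * bar_strain V p q {x, y}"
    using E(1) xy by (simp add: sum.remove)
  also have "\<dots> = lam {x, y} * ((p x - p y) \<bullet> (q x - q y))"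
    using bar_strain_pair[OF V(1) \<open>x \<in> V\<close> \<open>y \<in> V\<close> \<open>x \<noteq> y\<close>] by simp
  finally show ?thesis
    using stress_annihilates_velocity[OF V E(1) stress supp] strained by simp
qed

text \<open>Cases (a) and (b): adding a bar between the brace pair of an active driver yields an isostatic
  framework.\<close>
lemma bar_replacement_isostatic:
  assumes E: "finite E" "simple_edges E" and xy: "x \<noteq> y"
    and indep: "independent_fw I P E p" and gen: "spans_motions I P E p m"
    and strained: "(p x - p y) \<bullet> (m x - m y) \<noteq> 0"
  shows "isostatic_fw I P (insert {x, y} E) p"
  unfolding isostatic_fw_def
proof (intro conjI allI impI)
  fix q assume q: "first_order_motion I P (insert {x, y} E) p q"
  then have "first_order_motion I P E p q" by (auto simp: first_order_motion_def)
  moreover have "(p x - p y) \<bullet> (q x - q y) = 0" using q by (auto simp: first_order_motion_def)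
  ultimately show "q = (\<lambda>_. 0)" by (rule unstrained_motion_vanishes[OF gen strained])
next
  have mot: "first_order_motion I P E p m" using gen by (simp add: spans_motions_def)
  let ?E = "insert {x, y} E"
  have E': "finite ?E" "simple_edges ?E" using E xy by (auto simp: simple_edges_def)
  show "independent_fw I P ?E p"
    unfolding independent_fw_def
  proof (intro allI impI ballI)
    fix lam e assume stress: "self_stress I P ?E p lam" and e: "e \<in> ?E"
    have lam_xy: "lam {x, y} = 0"
      using mot strained
      by (intro stress_vanishes_on_strained_bar[OF E' stress, of m])
         (auto simp: first_order_motion_def)
    have "\<Union>E \<subseteq> \<Union>?E" by auto
    then have "self_stress I P E p (\<lambda>e. if e \<in> E then lam e else 0)"
      using lam_xy
      by (intro self_stress_zero_extension[OF finite_Union_simple_edges[OF E'] _ subset_refl stress])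
        auto
    then have "\<forall>e\<in>E. (if e \<in> E then lam e else 0) = 0"
      using indep unfolding independent_fw_def by blast
    with lam_xy e show "lam e = 0" by auto
  qed
qed

lemma degree_two_incident_edges:
  assumes "finite E" "degree E b = 2" "{a, b} \<in> E" "{b, c} \<in> E" "a \<noteq> c"
  shows "{e\<in>E. b \<in> e} = {{a, b}, {b, c}}"
proof -
  have "{a, b} \<noteq> {b, c}" using assms(5) by (auto simp: doubleton_eq_iff)
  then have "card {{a, b}, {b, c}} = degree E b" using assms(2) by simp
  moreover have "{{a, b}, {b, c}} \<subseteq> {e\<in>E. b \<in> e}" using assms(3,4) by auto
  moreover have "finite {e\<in>E. b \<in> e}" using assms(1) by simp
  ultimately show ?thesis by (metis card_subset_eq degree_def)
qed

lemma inner_diff_swap: "(x - y) \<bullet> (u - v) = (y - x) \<bullet> (v - u)"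
  for x y u v :: "'a::real_inner"
  by (metis inner_minus_left inner_minus_right minus_diff_eq minus_minus)

text \<open>Case (c), rigidity: a motion of the replacement extends to a motion of the linkage by moving
  the removed vertex along, so it is a multiple of the generator; since it does not strain the new
  bar, it vanishes.\<close>
lemma degree_two_replacement_rigid:
  assumes E: "simple_edges E" and b: "b \<in> I"
    and incident: "{e\<in>E. b \<in> e} = {{a, b}, {b, c}}"
    and gen: "spans_motions I P E p m" and strained: "(p a - p c) \<bullet> (m a - m c) \<noteq> 0"
    and q: "first_order_motion (I - {b}) P (insert {a, c} {e\<in>E. b \<notin> e}) p q"
  shows "q = (\<lambda>_. 0)"
proof -
  have "a \<noteq> b" "c \<noteq> b" using incident simple_edge_distinct[OF E] by blast+
  have q_ac: "(p a - p c) \<bullet> (q a - q c) = 0" and qb: "q b = 0"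
    using q by (auto simp: first_order_motion_def)
  have "p a \<noteq> p c" using strained by auto
  from degree_two_vertex_follows[OF this q_ac] obtain vb
    where vb: "(p b - p a) \<bullet> (vb - q a) = 0" "(p b - p c) \<bullet> (vb - q c) = 0" by blast
  define q' where "q' = q(b := vb)"
  have "first_order_motion I P E p q'"
    unfolding first_order_motion_def
  proof (intro conjI allI impI)
    fix v assume "v \<notin> I" then show "q' v = 0" using q b by (auto simp: q'_def first_order_motion_def)
  next
    fix i j assume ij: "{i, j} \<in> E"
    show "(p i - p j) \<bullet> (q' i - q' j) = 0"
    proof (cases "b \<in> {i, j}")
      case False
      with ij have "{i, j} \<in> insert {a, c} {e\<in>E. b \<notin> e}" by blast
      with q have "(p i - p j) \<bullet> (q i - q j) = 0" unfolding first_order_motion_def by blast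
      with False show ?thesis by (auto simp: q'_def)
    next
      case True
      with ij have "{i, j} \<in> {e\<in>E. b \<in> e}" by simp
      then have "{i, j} = {a, b} \<or> {i, j} = {b, c}" unfolding incident by simp
      then have "(i = b \<and> (j = a \<or> j = c)) \<or> (j = b \<and> (i = a \<or> i = c))"
        unfolding doubleton_eq_iff by blast
      moreover have at_b: "(p b - p k) \<bullet> (q' b - q' k) = 0" if "k = a \<or> k = c" for k
        using that vb \<open>a \<noteq> b\<close> \<open>c \<noteq> b\<close> by (auto simp: q'_def)
      moreover have "(p k - p b) \<bullet> (q' k - q' b) = 0" if "k = a \<or> k = c" for k
        using at_b[OF that] inner_diff_swap by metis
      ultimately show ?thesis by auto
    qed
  qed
  moreover have "(p a - p c) \<bullet> (q' a - q' c) = 0"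
    using q_ac \<open>a \<noteq> b\<close> \<open>c \<noteq> b\<close> by (simp add: q'_def)
  ultimately have "q' = (\<lambda>_. 0)" by (rule unstrained_motion_vanishes[OF gen strained])
  show ?thesis
  proof
    fix v show "q v = 0"
      using fun_cong[OF \<open>q' = (\<lambda>_. 0)\<close>, of v] qb by (cases "v = b") (simp_all add: q'_def)
  qed
qed

text \<open>Case (c), independence: the generator (with the removed vertex held still) strains only the new
  bar, so a self-stress vanishes there and then extends by zero to the original linkage.\<close>
lemma degree_two_replacement_independent:
  assumes E: "finite E" "simple_edges E" and b: "b \<in> I"
    and ab: "{a, b} \<in> E" and bc: "{b, c} \<in> E" and ac: "a \<noteq> c"
    and indep: "independent_fw I P E p" and mot: "first_order_motion I P E p m"
    and strained: "(p a - p c) \<bullet> (m a - m c) \<noteq> 0"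
  shows "independent_fw (I - {b}) P (insert {a, c} {e\<in>E. b \<notin> e}) p"
  unfolding independent_fw_def
proof (intro allI impI ballI)
  define E0 where "E0 = {e\<in>E. b \<notin> e}"
  fix lam e assume stress: "self_stress (I - {b}) P (insert {a, c} E0) p lam"
    and e: "e \<in> insert {a, c} E0"
  have "a \<noteq> b" "c \<noteq> b" using simple_edge_distinct[OF E(2)] ab bc by blast+
  have E': "finite (insert {a, c} E0)" "simple_edges (insert {a, c} E0)"
    using E ac by (auto simp: E0_def simple_edges_def)
  define m' where "m' = m(b := 0)"
  have lam_ac: "lam {a, c} = 0"
  proof (rule stress_vanishes_on_strained_bar[OF E' stress, of m'])
    show "m' v = 0" if "v \<notin> I - {b}" for v
      using mot that by (auto simp: m'_def first_order_motion_def)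
    show "(p i - p j) \<bullet> (m' i - m' j) = 0"
      if "{i, j} \<in> insert {a, c} E0" "{i, j} \<noteq> {a, c}" for i j
    proof -
      have "{i, j} \<in> E" "i \<noteq> b" "j \<noteq> b" using that by (auto simp: E0_def)
      with mot show ?thesis by (simp add: m'_def first_order_motion_def)
    qed
    show "(p a - p c) \<bullet> (m' a - m' c) \<noteq> 0"
      using strained \<open>a \<noteq> b\<close> \<open>c \<noteq> b\<close> by (simp add: m'_def)
  qed simp
  have union: "\<Union>(insert {a, c} E0) \<subseteq> \<Union>E" using ab bc by (auto simp: E0_def)
  have sub: "E0 \<subseteq> E" "E0 \<subseteq> insert {a, c} E0" by (auto simp: E0_def)
  have zero: "lam e' = 0" if "e' \<in> insert {a, c} E0" "e' \<notin> E0" for e'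
    using that lam_ac by auto
  have outside: "i \<notin> e'" if "i \<in> I" "i \<notin> I - {b}" "e' \<in> E0" for i e'
    using that by (auto simp: E0_def)
  have "self_stress I P E p (\<lambda>e. if e \<in> E0 then lam e else 0)"
    by (rule self_stress_zero_extension[OF finite_Union_simple_edges[OF E] subset_refl union
          stress sub zero outside])
  then have "\<forall>e\<in>E. (if e \<in> E0 then lam e else 0) = 0"
    using indep unfolding independent_fw_def by blast
  with lam_ac e show "lam e = 0" by (auto simp: E0_def)
qed

lemma residual_force_orthogonal_to_motion:
  assumes E: "finite E" "simple_edges E" and stress: "self_stress (I - {a}) P' E p lam"
    and mot: "first_order_motion I P E p m"
  shows "m a \<bullet> stress_force E p lam a = 0"
proof -
  define V where "V = insert a (\<Union>E)"
  have V: "finite V" "\<Union>E \<subseteq> V" "a \<in> V" using finite_Union_simple_edges[OF E] by (auto simp: V_def)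
  have other: "m v \<bullet> stress_force E p lam v = 0" if "v \<noteq> a" for v
    using stress mot that by (cases "v \<in> I") (auto simp: self_stress_iff_force first_order_motion_def)
  have "0 = (\<Sum>e\<in>E. lam e * bar_strain V p m e)"
    using motion_bar_strain_zero[OF mot V(1,2) E(2)] by simp
  also have "\<dots> = (\<Sum>v\<in>V. m v \<bullet> stress_force E p lam v)"
    by (rule virtual_work[OF V(1,2) E(1)])
  also have "\<dots> = m a \<bullet> stress_force E p lam a"
    using V other by (simp add: sum.remove)
  finally show ?thesis by simp
qed

lemma stress_force_with_extra_bar:
  assumes V: "finite V" "\<Union>E \<subseteq> V" and sub: "E2 \<subseteq> E"
    and ab: "{a, b} \<in> E" "{a, b} \<notin> E2" "a \<noteq> b"
  shows "stress_force E p (\<lambda>e. if e \<in> E2 then lam e else if e = {a, b} then s else 0) a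
       = stress_force E2 p lam a + s *\<^sub>R (p a - p b)"
proof -
  have V2: "\<Union>E2 \<subseteq> V" using V(2) sub by auto
  have b: "b \<in> V" using ab(1) V(2) by auto
  have "{a, j} = {a, b} \<longleftrightarrow> j = b" for j using ab(3) by (auto simp: doubleton_eq_iff)
  then have "stress_force E p (\<lambda>e. if e \<in> E2 then lam e else if e = {a, b} then s else 0) a
      = (\<Sum>j\<in>V. (if {a, j} \<in> E2 then lam {a, j} *\<^sub>R (p a - p j) else 0)
              + (if j = b then s *\<^sub>R (p a - p b) else 0))"
    unfolding stress_force_over[OF V] using sub ab by (intro sum.cong refl) auto
  also have "\<dots> = stress_force E2 p lam a + s *\<^sub>R (p a - p b)"
    using V(1) b by (simp add: sum.distrib stress_force_over[OF V(1) V2])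
  finally show ?thesis .
qed

text \<open>Case (d), rigidity: pinning a leaves only motions of the linkage that fix a, and these do
  not strain the brace {a, q_j}.\<close>
lemma pin_replacement_rigid:
  assumes IP: "I \<inter> P = {}" and qj: "qj \<in> P"
    and gen: "spans_motions I P E p m" and strained: "(p a - p qj) \<bullet> (m a - m qj) \<noteq> 0"
    and q: "first_order_motion (I - {a}) (insert a P) {e\<in>E. \<not> e \<subseteq> insert a P} p q"
  shows "q = (\<lambda>_. 0)"
proof -
  have off: "q v = 0" if "v \<notin> I - {a}" for v using q that by (simp add: first_order_motion_def)
  have "first_order_motion I P E p q"
    unfolding first_order_motion_def
  proof (intro conjI allI impI)
    fix v assume "v \<notin> I" then show "q v = 0" using off by simp
  next
    fix i j assume ij: "{i, j} \<in> E"
    show "(p i - p j) \<bullet> (q i - q j) = 0"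
    proof (cases "{i, j} \<subseteq> insert a P")
      case True
      then have "i \<notin> I - {a}" "j \<notin> I - {a}" using IP by auto
      then show ?thesis by (simp add: off)
    next
      case False
      with ij have "{i, j} \<in> {e\<in>E. \<not> e \<subseteq> insert a P}" by simp
      with q show ?thesis unfolding first_order_motion_def by blast
    qed
  qed
  moreover have "q a = 0" "q qj = 0" using off qj IP by auto
  ultimately show ?thesis using unstrained_motion_vanishes[OF gen strained] by simp
qed

text \<open>Case (d), independence: the residual force of a self-stress of the replacement at a is
  orthogonal to the non-zero velocity of a, as is the bar {a, q_i}; hence it is balanced by a
  weight on that bar, and independence of the linkage forces all weights to vanish.\<close>
lemma pin_replacement_independent:
  assumes E: "finite E" "simple_edges E" and IP: "I \<inter> P = {}"
    and a: "a \<in> I" and qi: "qi \<in> P" "{a, qi} \<in> E" and qj: "qj \<in> P"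
    and indep: "independent_fw I P E p" and mot: "first_order_motion I P E p m"
    and strained: "(p a - p qj) \<bullet> (m a - m qj) \<noteq> 0"
  shows "independent_fw (I - {a}) (insert a P) {e\<in>E. \<not> e \<subseteq> insert a P} p"
  unfolding independent_fw_def
proof (intro allI impI ballI)
  define E2 where "E2 = {e\<in>E. \<not> e \<subseteq> insert a P}"
  fix lam e assume stress: "self_stress (I - {a}) (insert a P) E2 p lam" and e: "e \<in> E2"
  have E2: "E2 \<subseteq> E" "finite E2" "simple_edges E2"
    using E simple_edges_subset[OF E(2)] by (auto simp: E2_def)
  have "m qi = 0" "m qj = 0" using IP qi qj mot by (auto simp: first_order_motion_def)
  define u where "u = p a - p qi"
  have "m a \<noteq> 0" using strained \<open>m qj = 0\<close> by auto
  have "(p a - p qi) \<bullet> (m a - m qi) = 0" using mot qi(2) by (simp add: first_order_motion_def)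
  then have "m a \<bullet> u = 0" using \<open>m qi = 0\<close> by (simp add: u_def inner_commute)
  have "u \<noteq> 0" using independent_bar_nondegenerate[OF indep qi(2)] by (simp add: u_def)
  have mot2: "first_order_motion I P E2 p m" using mot E2(1) by (auto simp: first_order_motion_def)
  define F where "F = stress_force E2 p lam a"
  have "m a \<bullet> F = 0"
    unfolding F_def by (rule residual_force_orthogonal_to_motion[OF E2(2,3) stress mot2])
  define t where "t = (F \<bullet> u) / (u \<bullet> u)"
  have F: "F = t *\<^sub>R u"
    unfolding t_def by (rule orthogonal_to_common_normal) fact+
  have "{a, qi} \<notin> E2" "a \<noteq> qi" using qi a IP by (auto simp: E2_def)
  define mu where "mu = (\<lambda>e. if e \<in> E2 then lam e else if e = {a, qi} then - t else 0)"
  have "stress_force E p mu i = 0" if i: "i \<in> I" for i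
  proof (cases "i = a")
    case True
    have V: "finite (\<Union>E)" "\<Union>E \<subseteq> \<Union>E" using finite_Union_simple_edges[OF E] by auto
    have "stress_force E p mu a = F + (- t) *\<^sub>R u"
      unfolding mu_def F_def u_def
      by (rule stress_force_with_extra_bar[OF V E2(1) qi(2)]) fact+
    with True F show ?thesis by simp
  next
    case False
    with i IP have "i \<notin> insert a P" by auto
    then have "{j. {i, j} \<in> E} = {j. {i, j} \<in> E2}" by (auto simp: E2_def)
    moreover have "mu {i, j} = lam {i, j}" if "{i, j} \<in> E2" for j using that by (simp add: mu_def)
    ultimately have "stress_force E p mu i = stress_force E2 p lam i"
      unfolding stress_force_def by (intro sum.cong) auto
    with stress False i show ?thesis by (simp add: self_stress_iff_force)
  qed
  then have "self_stress I P E p mu" by (simp add: self_stress_iff_force)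
  moreover have "e \<in> E" using e E2(1) by blast
  ultimately have "mu e = 0" using indep unfolding independent_fw_def by blast
  with e show "lam e = 0" by (simp add: mu_def)
qed

section \<open>The driver replacement theorem\<close>

lemma pinned_graph_facts:
  assumes "pinned_graph I P E"
  shows "finite I" "I \<inter> P = {}" "finite E" "simple_edges E" "\<forall>e\<in>E. e \<subseteq> I \<union> P"
proof -
  show fin: "finite I" "I \<inter> P = {}" using assms by (auto simp: pinned_graph_def)
  show inside: "\<forall>e\<in>E. e \<subseteq> I \<union> P" using assms by (fastforce simp: pinned_graph_def)
  show "simple_edges E" using assms by (fastforce simp: pinned_graph_def simple_edges_def)
  have "E \<subseteq> Pow (I \<union> P)" using inside by auto
  moreover have "finite P" using assms by (simp add: pinned_graph_def)
  ultimately show "finite E" using fin by (meson finite_Pow_iff finite_UnI finite_subset)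
qed

lemma driver_replacement_well_formed:
  assumes G: "pinned_graph I P E" and drv: "is_driver I P E d"
    and rep: "driver_replacement I P E d = (I', P', E')"
  shows "finite I'" "I' \<inter> P' = {}" "finite E'" "simple_edges E'"
proof -
  note G = pinned_graph_facts[OF G]
  have "finite I' \<and> I' \<inter> P' = {} \<and> finite E' \<and> simple_edges E'"
  proof (cases d)
    case (Piston a b)
    with G drv rep show ?thesis by (auto simp: simple_edges_def)
  next
    case (AngleDriver a b c)
    with G drv rep show ?thesis by (auto simp: simple_edges_def split: if_splits)
  next
    case (PinAngleDriver a qi qj)
    with G drv rep show ?thesis by (auto simp: simple_edges_def)
  qed
  then show "finite I'" "I' \<inter> P' = {}" "finite E'" "simple_edges E'" by simp_all
qed

lemma driver_replacement_isostatic: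
  assumes G: "pinned_graph I P E" and indep: "independent_fw I P E p"
    and gen: "spans_motions I P E p m" and drv: "is_driver I P E d"
    and strained: "case brace_pair d of (x, y) \<Rightarrow> (p x - p y) \<bullet> (m x - m y) \<noteq> 0"
    and rep: "driver_replacement I P E d = (I', P', E')"
  shows "isostatic_fw I' P' E' p"
proof -
  note G = pinned_graph_facts[OF G]
  have mot: "first_order_motion I P E p m" using gen by (simp add: spans_motions_def)
  show ?thesis
  proof (cases d)
    case (Piston a b)
    then have ab: "a \<noteq> b" and s: "(p a - p b) \<bullet> (m a - m b) \<noteq> 0"
      using drv strained by simp_all
    from Piston rep have "I' = I" "P' = P" "E' = insert {a, b} E" by simp_all
    with bar_replacement_isostatic[OF G(3,4) ab indep gen s] show ?thesis by simp
  next
    case (AngleDriver a b c)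
    then have b: "b \<in> I" and edges: "{a, b} \<in> E" "{b, c} \<in> E" "a \<noteq> c"
      and s: "(p a - p c) \<bullet> (m a - m c) \<noteq> 0"
      using drv strained by simp_all
    show ?thesis
    proof (cases "degree E b = 2")
      case True
      have "isostatic_fw (I - {b}) P (insert {a, c} {e\<in>E. b \<notin> e}) p"
        unfolding isostatic_fw_def
        using degree_two_replacement_independent[OF G(3,4) b edges indep mot s]
          degree_two_replacement_rigid[OF G(4) b degree_two_incident_edges[OF G(3) True edges]
            gen s]
        by blast
      moreover from AngleDriver True rep
      have "I' = I - {b}" "P' = P" "E' = insert {a, c} {e\<in>E. b \<notin> e}" by simp_all
      ultimately show ?thesis by simp
    next
      case False
      with AngleDriver rep have "I' = I" "P' = P" "E' = insert {a, c} E" by simp_all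
      with bar_replacement_isostatic[OF G(3,4) edges(3) indep gen s] show ?thesis by simp
    qed
  next
    case (PinAngleDriver a qi qj)
    then have a: "a \<in> I" and pins: "qi \<in> P" "{a, qi} \<in> E" "qj \<in> P"
      and s: "(p a - p qj) \<bullet> (m a - m qj) \<noteq> 0"
      using drv strained by simp_all
    have "isostatic_fw (I - {a}) (insert a P) {e\<in>E. \<not> e \<subseteq> insert a P} p"
      unfolding isostatic_fw_def
      using pin_replacement_independent[OF G(3,4,2) a pins indep mot s]
        pin_replacement_rigid[OF G(2) pins(3) gen s]
      by blast
    moreover from PinAngleDriver rep
    have "I' = I - {a}" "P' = insert a P" "E' = {e\<in>E. \<not> e \<subseteq> insert a P}" by auto
    ultimately show ?thesis by simp
  qed
qed

theorem mainTheorem4: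
  fixes I P :: "'v set" and E :: "'v set set" and p :: "'v config" and d :: "'v driver"
  assumes "pinned_graph I P E"
    and "independent_1dof_linkage I P E p"
    and "is_driver I P E d"
    and "active_driver I P E p d"
  shows "case driver_replacement I P E d of (I', P', E') \<Rightarrow>
           isostatic_fw I' P' E' p \<and> pinned_isostatic_graph I' P' E'"
proof -
  have indep: "independent_fw I P E p"
    using assms(2) by (simp add: independent_1dof_linkage_def)
  have "one_dof I P E p" using assms(2) by (simp add: independent_1dof_linkage_def)
  then obtain m where gen: "spans_motions I P E p m" by (blast dest: one_dof_spans_motions)
  have strained: "case brace_pair d of (x, y) \<Rightarrow> (p x - p y) \<bullet> (m x - m y) \<noteq> 0"
    using active_brace_strained[OF gen assms(4)] by (auto split: prod.split)
  obtain I' P' E' where rep: "driver_replacement I P E d = (I', P', E')"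
    by (cases "driver_replacement I P E d") auto
  have iso: "isostatic_fw I' P' E' p"
    by (rule driver_replacement_isostatic[OF assms(1) indep gen assms(3) strained rep])
  have "pinned_isostatic_graph I' P' E'"
    using driver_replacement_well_formed[OF assms(1,3) rep]
    by (intro isostatic_framework_pinned_isostatic_graph[OF _ _ _ _ iso])
  with iso rep show ?thesis by simp
qed

end
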